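(* Let $\mathbf{P}$ be a finite poset with a metric $d_{\mathbf{P}}$, and let $M,N$ be $\mathbf{P}$-modules. If $d_{\mathrm{GT}}(M,N)=0$, then $M\cong N$. Consequently $d_{\mathrm{GT}}$ is an extended metric on isomorphism classes of $\mathbf{P}$-modules.
   Context: Fix a field $k$; $\mathrm{vect}$ is the category of finite-dimensional $k$-vector spaces. A finite poset is a category with a unique morphism $x\to y$ iff $x\le y$; a $\mathbf{P}$-module is a functor $\mathbf{P}\to\mathrm{vect}$. For a monotone map $g$, $g^*$ denotes precomposition with $g$. A Galois insertion $f:\mathbf{Q}\rightleftarrows\mathbf{P}:g$ consists of monotone maps $f:\mathbf{Q}\to\mathbf{P}$, $g:\mathbf{P}\to\mathbf{Q}$ with $f(u)\le x\iff u\le g(x)$ for all $u,x$, and $f\circ g=\mathrm{id}_{\mathbf{P}}$. A Galois coupling of $(M,N)$ is a tuple $(\mathbf{Q},f\dashv g,h\dashv i,\Gamma)$ with $\mathbf{Q}$ a finite poset, $f:\mathbf{Q}\rightleftarrows\mathbf{P}:g$ and $h:\mathbf{Q}\rightleftarrows\mathbf{P}:i$ Galois insertions, and $\Gamma\in\mathrm{vect}^{\mathbf{Q}}$ with $g^*\Gamma\cong M$ and $i^*\Gamma\cong N$. Its cost is $\sup_{q\in\mathbf{Q}}d_{\mathbf{P}}(f(q),h(q))$. $d_{\mathrm{GT}}(M,N)$ is the infimum of costs of all Galois couplings of $(M,N)$, and $\infty$ if there is none. *)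

theory Defs
  imports "Jordan_Normal_Form.Matrix" "HOL-Library.Extended_Real"
begin

text \<open>A finite-dimensional k-vector space is modelled as k^n (n = its dimension), a linear
map k^n -> k^m as an m x n matrix.  A module over a poset (carrier A, order lee) is a pair
(dimension function, structure maps) where the structure map for x \<le> y is a
(dim y) x (dim x) matrix, satisfying functoriality.\<close>

type_synonym ('p, 'k) pmod = "('p \<Rightarrow> nat) \<times> ('p \<Rightarrow> 'p \<Rightarrow> 'k mat)"

definition finite_poset :: "'q set \<Rightarrow> ('q \<Rightarrow> 'q \<Rightarrow> bool) \<Rightarrow> bool" where
  "finite_poset A lee \<longleftrightarrow> finite A \<and>
     (\<forall>x\<in>A. lee x x) \<and>
     (\<forall>x\<in>A. \<forall>y\<in>A. lee x y \<and> lee y x \<longrightarrow> x = y) \<and>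
     (\<forall>x\<in>A. \<forall>y\<in>A. \<forall>z\<in>A. lee x y \<and> lee y z \<longrightarrow> lee x z)"

definition is_pmod :: "'q set \<Rightarrow> ('q \<Rightarrow> 'q \<Rightarrow> bool) \<Rightarrow> ('q, 'k::field) pmod \<Rightarrow> bool" where
  "is_pmod A lee M \<longleftrightarrow>
     (\<forall>x\<in>A. snd M x x = 1\<^sub>m (fst M x)) \<and>
     (\<forall>x\<in>A. \<forall>y\<in>A. lee x y \<longrightarrow> snd M x y \<in> carrier_mat (fst M y) (fst M x)) \<and>
     (\<forall>x\<in>A. \<forall>y\<in>A. \<forall>z\<in>A. lee x y \<and> lee y z \<longrightarrow> snd M x z = snd M y z * snd M x y)"

definition pmod_iso :: "'q set \<Rightarrow> ('q \<Rightarrow> 'q \<Rightarrow> bool) \<Rightarrow> ('q, 'k::field) pmod \<Rightarrow> ('q, 'k) pmod \<Rightarrow> bool" where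
  "pmod_iso A lee M N \<longleftrightarrow> (\<exists>\<phi>.
     (\<forall>x\<in>A. fst N x = fst M x \<and> \<phi> x \<in> carrier_mat (fst M x) (fst M x) \<and> invertible_mat (\<phi> x)) \<and>
     (\<forall>x\<in>A. \<forall>y\<in>A. lee x y \<longrightarrow> \<phi> y * snd M x y = snd N x y * \<phi> x))"

definition pullback :: "('p \<Rightarrow> 'q) \<Rightarrow> ('q, 'k) pmod \<Rightarrow> ('p, 'k) pmod" where
  "pullback g G = (\<lambda>x. fst G (g x), \<lambda>x y. snd G (g x) (g y))"

definition galois_insertion :: "nat set \<Rightarrow> (nat \<Rightarrow> nat \<Rightarrow> bool) \<Rightarrow> (nat \<Rightarrow> 'p::order) \<Rightarrow> ('p \<Rightarrow> nat) \<Rightarrow> bool" where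
  "galois_insertion Q leQ f g \<longleftrightarrow>
     (\<forall>u\<in>Q. \<forall>v\<in>Q. leQ u v \<longrightarrow> f u \<le> f v) \<and>
     (\<forall>x. g x \<in> Q) \<and>
     (\<forall>x y. x \<le> y \<longrightarrow> leQ (g x) (g y)) \<and>
     (\<forall>u\<in>Q. \<forall>x. f u \<le> x \<longleftrightarrow> leQ u (g x)) \<and>
     (\<forall>x. f (g x) = x)"

definition is_metric :: "('p \<Rightarrow> 'p \<Rightarrow> real) \<Rightarrow> bool" where
  "is_metric d \<longleftrightarrow> (\<forall>x y. 0 \<le> d x y) \<and> (\<forall>x y. d x y = 0 \<longleftrightarrow> x = y) \<and>
     (\<forall>x y. d x y = d y x) \<and> (\<forall>x y z. d x z \<le> d x y + d y z)"

text \<open>Galois couplings; the finite poset Q is modelled (w.l.o.g., up to isomorphism)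
as a finite subset of nat with a partial order.\<close>
definition galois_coupling ::
  "('p::{finite,order}, 'k::field) pmod \<Rightarrow> ('p, 'k) pmod \<Rightarrow> nat set \<Rightarrow> (nat \<Rightarrow> nat \<Rightarrow> bool) \<Rightarrow>
   (nat \<Rightarrow> 'p) \<Rightarrow> ('p \<Rightarrow> nat) \<Rightarrow> (nat \<Rightarrow> 'p) \<Rightarrow> ('p \<Rightarrow> nat) \<Rightarrow> (nat, 'k) pmod \<Rightarrow> bool" where
  "galois_coupling M N Q leQ f g h i \<Gamma> \<longleftrightarrow>
     finite_poset Q leQ \<and> galois_insertion Q leQ f g \<and> galois_insertion Q leQ h i \<and>
     is_pmod Q leQ \<Gamma> \<and>
     pmod_iso UNIV (\<le>) (pullback g \<Gamma>) M \<and> pmod_iso UNIV (\<le>) (pullback i \<Gamma>) N"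

definition coupling_cost :: "('p \<Rightarrow> 'p \<Rightarrow> real) \<Rightarrow> nat set \<Rightarrow> (nat \<Rightarrow> 'p) \<Rightarrow> (nat \<Rightarrow> 'p) \<Rightarrow> ereal" where
  "coupling_cost d Q f h = (SUP q\<in>Q. ereal (d (f q) (h q)))"

definition d_GT :: "('p::{finite,order} \<Rightarrow> 'p \<Rightarrow> real) \<Rightarrow> ('p, 'k::field) pmod \<Rightarrow> ('p, 'k) pmod \<Rightarrow> ereal" where
  "d_GT d M N = Inf {c. \<exists>Q leQ f g h i \<Gamma>. galois_coupling M N Q leQ f g h i \<Gamma> \<and> c = coupling_cost d Q f h}"

end

theory Submission
  imports Defs
begin

text \<open>
  Every coupling cost is a value of \<open>d\<^sub>P\<close> at a pair of points of the finite poset \<open>P\<close>, so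
  the infimum defining \<open>d\<^sub>G\<^sub>T\<close> ranges over a finite set and is attained.  A coupling of cost
  0 has \<open>f = h\<close>, hence \<open>g = i\<close> by uniqueness of right adjoints, and
  \<open>M \<cong> g\<^sup>*\<Gamma> = i\<^sup>*\<Gamma> \<cong> N\<close>.  The identity coupling gives \<open>d\<^sub>G\<^sub>T(M, M) = 0\<close>,
  exchanging the two insertions gives symmetry, and isomorphic modules admit the same couplings.

  For the triangle inequality, a coupling \<open>(Q\<^sub>1, \<Gamma>\<^sub>1)\<close> of \<open>(M, N)\<close> and a coupling
  \<open>(Q\<^sub>2, \<Gamma>\<^sub>2)\<close> of \<open>(N, L)\<close> are glued along their common copy of \<open>P\<close>: after
  conjugating \<open>\<Gamma>\<^sub>2\<close> so that \<open>g\<^sub>2\<^sup>*\<Gamma>\<^sub>2 = i\<^sub>1\<^sup>*\<Gamma>\<^sub>1\<close> holds on the nose, the two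
  modules combine into a module on a subposet of \<open>Q\<^sub>1 \<times> Q\<^sub>2\<close>, and the cost of the resulting
  coupling of \<open>(M, L)\<close> is bounded via the triangle inequality of \<open>d\<^sub>P\<close>, because
  \<open>h\<^sub>1 a = f\<^sub>2 b\<close> for every point \<open>(a, b)\<close> of the glued poset.
\<close>

definition mat_inv :: "'k::field mat \<Rightarrow> 'k mat" where
  "mat_inv A = (SOME B. inverts_mat A B \<and> inverts_mat B A)"

lemma mat_inv:
  fixes A :: "'k::field mat"
  assumes A: "A \<in> carrier_mat n n" and inv: "invertible_mat A"
  shows mat_inv_carrier: "mat_inv A \<in> carrier_mat n n"
    and mat_inv_right: "A * mat_inv A = 1\<^sub>m n"
    and mat_inv_left: "mat_inv A * A = 1\<^sub>m n"
    and invertible_mat_inv: "invertible_mat (mat_inv A)"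
proof -
  have "\<exists>B. inverts_mat A B \<and> inverts_mat B A"
    using inv unfolding invertible_mat_def by blast
  then have inverts: "inverts_mat A (mat_inv A) \<and> inverts_mat (mat_inv A) A"
    unfolding mat_inv_def by (rule someI_ex)
  then have AB: "A * mat_inv A = 1\<^sub>m n" and BA: "mat_inv A * A = 1\<^sub>m (dim_row (mat_inv A))"
    using A unfolding inverts_mat_def by auto
  have "dim_col (mat_inv A) = n"
    using arg_cong[OF AB, of dim_col] by simp
  moreover have "dim_row (mat_inv A) = n"
    using arg_cong[OF BA, of dim_col] A by simp
  ultimately show carrier: "mat_inv A \<in> carrier_mat n n" by auto
  show "A * mat_inv A = 1\<^sub>m n" by (fact AB)
  show "mat_inv A * A = 1\<^sub>m n" using BA carrier by simp
  show "invertible_mat (mat_inv A)"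
    using inverts carrier unfolding invertible_mat_def by auto
qed

lemma mat_inv_cancel:
  fixes a Y :: "'k::field mat"
  assumes a: "a \<in> carrier_mat m m" "invertible_mat a"
  shows mat_inv_cancel_left: "Y \<in> carrier_mat m n \<Longrightarrow> mat_inv a * (a * Y) = Y"
    and mat_inv_cancel_right: "Y \<in> carrier_mat n m \<Longrightarrow> Y * a * mat_inv a = Y"
    and mat_inv_cancel_right': "Y \<in> carrier_mat n m \<Longrightarrow> Y * mat_inv a * a = Y"
proof -
  note inv = mat_inv_carrier[OF a] mat_inv_left[OF a] mat_inv_right[OF a]
  show "Y \<in> carrier_mat m n \<Longrightarrow> mat_inv a * (a * Y) = Y"
    using assoc_mult_mat[OF inv(1) a(1), of Y n] inv by simp
  show "Y \<in> carrier_mat n m \<Longrightarrow> Y * a * mat_inv a = Y"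
    using assoc_mult_mat[OF _ a(1) inv(1), of Y n] inv by simp
  show "Y \<in> carrier_mat n m \<Longrightarrow> Y * mat_inv a * a = Y"
    using assoc_mult_mat[OF _ inv(1) a(1), of Y n] inv by simp
qed

lemma invertible_mat_one: "invertible_mat (1\<^sub>m n :: 'k::semiring_1 mat)"
  unfolding invertible_mat_def inverts_mat_def by (intro conjI exI[of _ "1\<^sub>m n"]) auto

lemma invertible_mat_mult:
  fixes A B :: "'k::field mat"
  assumes A: "A \<in> carrier_mat n n" "invertible_mat A" and B: "B \<in> carrier_mat n n" "invertible_mat B"
  shows "invertible_mat (A * B)"
proof -
  let ?C = "mat_inv B * mat_inv A"
  have C: "?C \<in> carrier_mat n n"
    using mat_inv_carrier[OF A] mat_inv_carrier[OF B] by simp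
  have "A * B * ?C = A * (B * mat_inv B) * mat_inv A"
    using A B C mat_inv_carrier[OF A] mat_inv_carrier[OF B]
    by (simp add: assoc_mult_mat[of _ n n _ n _ n])
  then have "A * B * ?C = 1\<^sub>m n"
    using A B by (simp add: mat_inv_right)
  moreover have "?C * (A * B) = mat_inv B * (mat_inv A * A) * B"
    using A B C mat_inv_carrier[OF A] mat_inv_carrier[OF B]
    by (simp add: assoc_mult_mat[of _ n n _ n _ n])
  then have "?C * (A * B) = 1\<^sub>m n"
    using A B mat_inv_carrier[OF B] by (simp add: mat_inv_left)
  ultimately show ?thesis
    using A B C unfolding invertible_mat_def inverts_mat_def
    by (intro conjI exI[of _ ?C]) auto
qed

lemma mat_inv_intertwine:
  fixes a b X Y :: "'k::field mat"
  assumes a: "a \<in> carrier_mat m m" "invertible_mat a" and b: "b \<in> carrier_mat n n" "invertible_mat b"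
    and X: "X \<in> carrier_mat n m" and Y: "Y \<in> carrier_mat n m" and comm: "b * X = Y * a"
  shows "X * mat_inv a = mat_inv b * Y"
proof -
  have "X * mat_inv a = mat_inv b * (Y * a) * mat_inv a"
    using mat_inv_cancel_left[OF b X] comm by simp
  also have "\<dots> = mat_inv b * (Y * a * mat_inv a)"
    using a b Y by (intro assoc_mult_mat) (auto intro: mat_inv_carrier)
  also have "\<dots> = mat_inv b * Y"
    using mat_inv_cancel_right[OF a Y] by simp
  finally show ?thesis .
qed

lemma finite_posetD:
  assumes "finite_poset A leq"
  shows "finite A" and "x \<in> A \<Longrightarrow> leq x x"
    and "x \<in> A \<Longrightarrow> y \<in> A \<Longrightarrow> leq x y \<Longrightarrow> leq y x \<Longrightarrow> x = y"
    and "x \<in> A \<Longrightarrow> y \<in> A \<Longrightarrow> z \<in> A \<Longrightarrow> leq x y \<Longrightarrow> leq y z \<Longrightarrow> leq x z"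
  using assms unfolding finite_poset_def by blast+

lemma is_pmodD:
  assumes "is_pmod A leq M"
  shows "x \<in> A \<Longrightarrow> snd M x x = 1\<^sub>m (fst M x)"
    and "x \<in> A \<Longrightarrow> y \<in> A \<Longrightarrow> leq x y \<Longrightarrow> snd M x y \<in> carrier_mat (fst M y) (fst M x)"
    and "x \<in> A \<Longrightarrow> y \<in> A \<Longrightarrow> z \<in> A \<Longrightarrow> leq x y \<Longrightarrow> leq y z \<Longrightarrow>
      snd M x z = snd M y z * snd M x y"
  using assms unfolding is_pmod_def by blast+

lemma pmod_iso_refl:
  assumes "is_pmod A leq M"
  shows "pmod_iso A leq M M"
  unfolding pmod_iso_def
proof (intro exI[of _ "\<lambda>x. 1\<^sub>m (fst M x)"] conjI ballI impI)
  fix x y assume "x \<in> A" "y \<in> A" "leq x y"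
  then show "1\<^sub>m (fst M y) * snd M x y = snd M x y * 1\<^sub>m (fst M x)"
    using is_pmodD(2)[OF assms \<open>x \<in> A\<close> \<open>y \<in> A\<close> \<open>leq x y\<close>] by simp
qed (auto simp: invertible_mat_one)

lemma pmod_iso_sym:
  assumes M: "is_pmod A leq M" and N: "is_pmod A leq N" and iso: "pmod_iso A leq M N"
  shows "pmod_iso A leq N M"
proof -
  obtain \<phi> where \<phi>: "\<And>x. x \<in> A \<Longrightarrow>
      fst N x = fst M x \<and> \<phi> x \<in> carrier_mat (fst M x) (fst M x) \<and> invertible_mat (\<phi> x)"
    and comm: "\<And>x y. x \<in> A \<Longrightarrow> y \<in> A \<Longrightarrow> leq x y \<Longrightarrow> \<phi> y * snd M x y = snd N x y * \<phi> x"
    using iso unfolding pmod_iso_def by blast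
  show ?thesis unfolding pmod_iso_def
  proof (intro exI[of _ "\<lambda>x. mat_inv (\<phi> x)"] conjI ballI impI)
    fix x assume "x \<in> A"
    then show "fst M x = fst N x" "mat_inv (\<phi> x) \<in> carrier_mat (fst N x) (fst N x)"
      "invertible_mat (mat_inv (\<phi> x))"
      using \<phi> mat_inv_carrier invertible_mat_inv by metis+
  next
    fix x y assume xy: "x \<in> A" "y \<in> A" "leq x y"
    then show "mat_inv (\<phi> y) * snd N x y = snd M x y * mat_inv (\<phi> x)"
      using mat_inv_intertwine[OF _ _ _ _ _ _ comm[OF xy]] is_pmodD(2)[OF M xy] is_pmodD(2)[OF N xy] \<phi>
      by (metis (no_types, lifting))
  qed
qed

lemma pmod_iso_trans:
  assumes M: "is_pmod A leq M" and N: "is_pmod A leq N" and L: "is_pmod A leq L"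
    and MN: "pmod_iso A leq M N" and NL: "pmod_iso A leq N L"
  shows "pmod_iso A leq M L"
proof -
  obtain \<phi> where \<phi>: "\<And>x. x \<in> A \<Longrightarrow>
      fst N x = fst M x \<and> \<phi> x \<in> carrier_mat (fst M x) (fst M x) \<and> invertible_mat (\<phi> x)"
    and \<phi>_comm: "\<And>x y. x \<in> A \<Longrightarrow> y \<in> A \<Longrightarrow> leq x y \<Longrightarrow> \<phi> y * snd M x y = snd N x y * \<phi> x"
    using MN unfolding pmod_iso_def by blast
  obtain \<psi> where \<psi>: "\<And>x. x \<in> A \<Longrightarrow>
      fst L x = fst N x \<and> \<psi> x \<in> carrier_mat (fst N x) (fst N x) \<and> invertible_mat (\<psi> x)"
    and \<psi>_comm: "\<And>x y. x \<in> A \<Longrightarrow> y \<in> A \<Longrightarrow> leq x y \<Longrightarrow> \<psi> y * snd N x y = snd L x y * \<psi> x"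
    using NL unfolding pmod_iso_def by blast
  show ?thesis unfolding pmod_iso_def
  proof (intro exI[of _ "\<lambda>x. \<psi> x * \<phi> x"] conjI ballI impI)
    fix x assume x: "x \<in> A"
    then show "fst L x = fst M x" "\<psi> x * \<phi> x \<in> carrier_mat (fst M x) (fst M x)"
      using \<phi> \<psi> by (metis mult_carrier_mat)+
    show "invertible_mat (\<psi> x * \<phi> x)"
      using \<phi>[OF x] \<psi>[OF x] by (intro invertible_mat_mult[of _ "fst M x"]) auto
  next
    fix x y assume xy: "x \<in> A" "y \<in> A" "leq x y"
    have car: "\<phi> x \<in> carrier_mat (fst M x) (fst M x)" "\<psi> x \<in> carrier_mat (fst M x) (fst M x)"
      "\<phi> y \<in> carrier_mat (fst M y) (fst M y)" "\<psi> y \<in> carrier_mat (fst M y) (fst M y)"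
      "snd M x y \<in> carrier_mat (fst M y) (fst M x)" "snd N x y \<in> carrier_mat (fst M y) (fst M x)"
      "snd L x y \<in> carrier_mat (fst M y) (fst M x)"
      using \<phi> \<psi> xy is_pmodD(2)[OF M xy] is_pmodD(2)[OF N xy] is_pmodD(2)[OF L xy] by auto
    have "\<psi> y * \<phi> y * snd M x y = \<psi> y * (snd N x y * \<phi> x)"
      using assoc_mult_mat[OF car(4,3,5)] \<phi>_comm[OF xy] by simp
    also have "\<dots> = snd L x y * \<psi> x * \<phi> x"
      using assoc_mult_mat[OF car(4,6,1)] \<psi>_comm[OF xy] by simp
    finally show "\<psi> y * \<phi> y * snd M x y = snd L x y * (\<psi> x * \<phi> x)"
      using assoc_mult_mat[OF car(7,2,1)] by simp
  qed
qed

lemma pmod_iso_cong: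
  assumes "\<And>x. x \<in> A \<Longrightarrow> fst M x = fst M' x"
    and "\<And>x y. x \<in> A \<Longrightarrow> y \<in> A \<Longrightarrow> leq x y \<Longrightarrow> snd M x y = snd M' x y"
    and "pmod_iso A leq M' N"
  shows "pmod_iso A leq M N"
  using assms unfolding pmod_iso_def by metis

definition pmod_conj :: "('q \<Rightarrow> 'k::field mat) \<Rightarrow> ('q, 'k) pmod \<Rightarrow> ('q, 'k) pmod" where
  "pmod_conj \<Phi> \<Gamma> = (fst \<Gamma>, \<lambda>u v. \<Phi> v * snd \<Gamma> u v * mat_inv (\<Phi> u))"

lemma is_pmod_conj:
  assumes \<Gamma>: "is_pmod A leq \<Gamma>"
    and \<Phi>: "\<And>q. q \<in> A \<Longrightarrow> \<Phi> q \<in> carrier_mat (fst \<Gamma> q) (fst \<Gamma> q) \<and> invertible_mat (\<Phi> q)"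
  shows "is_pmod A leq (pmod_conj \<Phi> \<Gamma>)"
proof -
  note \<Phi>_car = conjunct1[OF \<Phi>] and \<Phi>_inv = conjunct2[OF \<Phi>]
  have inv_car: "mat_inv (\<Phi> q) \<in> carrier_mat (fst \<Gamma> q) (fst \<Gamma> q)" if "q \<in> A" for q
    using mat_inv_carrier \<Phi> that by blast
  note map_car = is_pmodD(2)[OF \<Gamma>]
  show ?thesis
    unfolding is_pmod_def pmod_conj_def fst_conv snd_conv
  proof (intro conjI ballI impI)
    fix x assume x: "x \<in> A"
    show "\<Phi> x * snd \<Gamma> x x * mat_inv (\<Phi> x) = 1\<^sub>m (fst \<Gamma> x)"
      using is_pmodD(1)[OF \<Gamma> x] \<Phi>_car[OF x] mat_inv_right[OF \<Phi>_car[OF x] \<Phi>_inv[OF x]] by simp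
  next
    fix x y assume "x \<in> A" "y \<in> A" "leq x y"
    then show "\<Phi> y * snd \<Gamma> x y * mat_inv (\<Phi> x) \<in> carrier_mat (fst \<Gamma> y) (fst \<Gamma> x)"
      using \<Phi>_car inv_car map_car by (meson mult_carrier_mat)
  next
    fix x y z assume xyz: "x \<in> A" "y \<in> A" "z \<in> A" "leq x y \<and> leq y z"
    then have xy: "leq x y" and yz: "leq y z" by auto
    note car = \<Phi>_car[OF xyz(2)] \<Phi>_car[OF xyz(3)] inv_car[OF xyz(1)] inv_car[OF xyz(2)]
      map_car[OF xyz(1,2) xy] map_car[OF xyz(2,3) yz]
    let ?a = "\<Phi> z * snd \<Gamma> y z" and ?b = "snd \<Gamma> x y * mat_inv (\<Phi> x)"
    have a: "?a \<in> carrier_mat (fst \<Gamma> z) (fst \<Gamma> y)" and b: "?b \<in> carrier_mat (fst \<Gamma> y) (fst \<Gamma> x)"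
      using mult_carrier_mat[OF car(2,6)] mult_carrier_mat[OF car(5,3)] .
    have "?a * mat_inv (\<Phi> y) * (\<Phi> y * snd \<Gamma> x y * mat_inv (\<Phi> x))
        = ?a * mat_inv (\<Phi> y) * (\<Phi> y * ?b)"
      using assoc_mult_mat[OF car(1,5,3)] by simp
    also have "\<dots> = ?a * (mat_inv (\<Phi> y) * (\<Phi> y * ?b))"
      using a b car by (intro assoc_mult_mat) auto
    also have "\<dots> = ?a * ?b"
      using mat_inv_cancel_left[OF \<Phi>_car \<Phi>_inv b] xyz by simp
    also have "\<dots> = ?a * snd \<Gamma> x y * mat_inv (\<Phi> x)"
      using assoc_mult_mat[OF a car(5,3)] by simp
    also have "\<dots> = \<Phi> z * (snd \<Gamma> y z * snd \<Gamma> x y) * mat_inv (\<Phi> x)"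
      using assoc_mult_mat[OF car(2,6,5)] by simp
    finally show "\<Phi> z * snd \<Gamma> x z * mat_inv (\<Phi> x)
        = \<Phi> z * snd \<Gamma> y z * mat_inv (\<Phi> y) * (\<Phi> y * snd \<Gamma> x y * mat_inv (\<Phi> x))"
      using is_pmodD(3)[OF \<Gamma> xyz(1-3) xy yz] by simp
  qed
qed

lemma pmod_iso_conj:
  assumes \<Gamma>: "is_pmod A leq \<Gamma>"
    and \<Phi>: "\<And>q. q \<in> A \<Longrightarrow> \<Phi> q \<in> carrier_mat (fst \<Gamma> q) (fst \<Gamma> q) \<and> invertible_mat (\<Phi> q)"
  shows "pmod_iso A leq \<Gamma> (pmod_conj \<Phi> \<Gamma>)"
  unfolding pmod_iso_def pmod_conj_def fst_conv snd_conv
proof (intro exI[of _ \<Phi>] conjI ballI impI)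
  fix x y assume xy: "x \<in> A" "y \<in> A" "leq x y"
  have "\<Phi> y * snd \<Gamma> x y \<in> carrier_mat (fst \<Gamma> y) (fst \<Gamma> x)"
    using \<Phi>[OF xy(2)] is_pmodD(2)[OF \<Gamma> xy] by (meson mult_carrier_mat)
  then show "\<Phi> y * snd \<Gamma> x y = \<Phi> y * snd \<Gamma> x y * mat_inv (\<Phi> x) * \<Phi> x"
    using mat_inv_cancel_right' \<Phi>[OF xy(1)] by metis
qed (use \<Phi> in auto)

text \<open>\<^const>\<open>galois_insertion\<close> and \<^const>\<open>galois_coupling\<close> index \<open>Q\<close> by \<^typ>\<open>nat\<close>;
  allowing any index type lets couplings be built on \<open>P\<close> itself and on products.\<close>

definition galois_insertion_on :: "'q set \<Rightarrow> ('q \<Rightarrow> 'q \<Rightarrow> bool) \<Rightarrow> ('q \<Rightarrow> 'p::order) \<Rightarrow> ('p \<Rightarrow> 'q) \<Rightarrow> bool"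
  where
  "galois_insertion_on Q leQ f g \<longleftrightarrow>
     (\<forall>u\<in>Q. \<forall>v\<in>Q. leQ u v \<longrightarrow> f u \<le> f v) \<and>
     (\<forall>x. g x \<in> Q) \<and>
     (\<forall>x y. x \<le> y \<longrightarrow> leQ (g x) (g y)) \<and>
     (\<forall>u\<in>Q. \<forall>x. f u \<le> x \<longleftrightarrow> leQ u (g x)) \<and>
     (\<forall>x. f (g x) = x)"

definition galois_coupling_on ::
  "('p::order, 'k::field) pmod \<Rightarrow> ('p, 'k) pmod \<Rightarrow> 'q set \<Rightarrow> ('q \<Rightarrow> 'q \<Rightarrow> bool) \<Rightarrow>
   ('q \<Rightarrow> 'p) \<Rightarrow> ('p \<Rightarrow> 'q) \<Rightarrow> ('q \<Rightarrow> 'p) \<Rightarrow> ('p \<Rightarrow> 'q) \<Rightarrow> ('q, 'k) pmod \<Rightarrow> bool" where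
  "galois_coupling_on M N Q leQ f g h i \<Gamma> \<longleftrightarrow>
     finite_poset Q leQ \<and> galois_insertion_on Q leQ f g \<and> galois_insertion_on Q leQ h i \<and>
     is_pmod Q leQ \<Gamma> \<and>
     pmod_iso UNIV (\<le>) (pullback g \<Gamma>) M \<and> pmod_iso UNIV (\<le>) (pullback i \<Gamma>) N"

lemma galois_insertion_eq_on: "galois_insertion = galois_insertion_on"
  by (intro ext) (simp add: galois_insertion_def galois_insertion_on_def)

lemma galois_coupling_eq_on: "galois_coupling = galois_coupling_on"
  by (intro ext) (simp add: galois_coupling_def galois_coupling_on_def galois_insertion_eq_on)

lemma galois_insertion_onD:
  assumes "galois_insertion_on Q leQ f g"
  shows "g x \<in> Q" and "x \<le> y \<Longrightarrow> leQ (g x) (g y)"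
    and "u \<in> Q \<Longrightarrow> v \<in> Q \<Longrightarrow> leQ u v \<Longrightarrow> f u \<le> f v"
    and "u \<in> Q \<Longrightarrow> f u \<le> x \<longleftrightarrow> leQ u (g x)" and "f (g x) = x"
    and "u \<in> Q \<Longrightarrow> leQ u (g (f u))"
  using assms unfolding galois_insertion_on_def by auto

lemma galois_insertion_right_unique:
  assumes Q: "finite_poset Q leQ" and fg: "galois_insertion_on Q leQ f g"
    and hi: "galois_insertion_on Q leQ h i" and fh: "\<And>q. q \<in> Q \<Longrightarrow> f q = h q"
  shows "g = i"
proof
  fix x
  have "leQ (g x) (i x)"
    using galois_insertion_onD[OF hi] galois_insertion_onD(1,5)[OF fg] fh by (metis order_refl)
  moreover have "leQ (i x) (g x)"
    using galois_insertion_onD[OF fg] galois_insertion_onD(1,5)[OF hi] fh by (metis order_refl)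
  ultimately show "g x = i x"
    using finite_posetD(3)[OF Q] galois_insertion_onD(1) fg hi by metis
qed

lemma pullback_comp: "pullback g (pullback e \<Gamma>) = pullback (e \<circ> g) \<Gamma>"
  unfolding pullback_def by simp

lemma is_pmod_pullback:
  assumes "galois_insertion_on Q leQ f g" and "is_pmod Q leQ \<Gamma>"
  shows "is_pmod UNIV (\<le>) (pullback g \<Gamma>)"
  using assms unfolding galois_insertion_on_def is_pmod_def pullback_def by auto

lemma pmod_iso_pullback:
  assumes "galois_insertion_on Q leQ f g" and "pmod_iso Q leQ \<Gamma> \<Gamma>'"
  shows "pmod_iso UNIV (\<le>) (pullback g \<Gamma>) (pullback g \<Gamma>')"
proof -
  obtain \<phi> where "\<forall>x\<in>Q. fst \<Gamma>' x = fst \<Gamma> x \<and> \<phi> x \<in> carrier_mat (fst \<Gamma> x) (fst \<Gamma> x)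
      \<and> invertible_mat (\<phi> x)"
    and "\<forall>x\<in>Q. \<forall>y\<in>Q. leQ x y \<longrightarrow> \<phi> y * snd \<Gamma> x y = snd \<Gamma>' x y * \<phi> x"
    using assms(2) unfolding pmod_iso_def by blast
  then show ?thesis
    using galois_insertion_onD(1,2)[OF assms(1)] unfolding pmod_iso_def pullback_def
    by (intro exI[of _ "\<lambda>x. \<phi> (g x)"]) auto
qed

lemma pullback_iso_lifts:
  assumes fg: "galois_insertion_on Q leQ f g" and \<Gamma>: "is_pmod Q leQ \<Gamma>"
    and K: "is_pmod UNIV (\<le>) K" and iso: "pmod_iso UNIV (\<le>) (pullback g \<Gamma>) K"
  obtains \<Gamma>' where "is_pmod Q leQ \<Gamma>'" and "pmod_iso Q leQ \<Gamma> \<Gamma>'"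
    and "\<And>x. fst \<Gamma>' (g x) = fst K x"
    and "\<And>x y. x \<le> y \<Longrightarrow> snd \<Gamma>' (g x) (g y) = snd K x y"
proof -
  obtain \<psi> where \<psi>: "\<And>x. fst K x = fst \<Gamma> (g x) \<and>
      \<psi> x \<in> carrier_mat (fst \<Gamma> (g x)) (fst \<Gamma> (g x)) \<and> invertible_mat (\<psi> x)"
    and comm: "\<And>x y. x \<le> y \<Longrightarrow> \<psi> y * snd \<Gamma> (g x) (g y) = snd K x y * \<psi> x"
    using iso unfolding pmod_iso_def pullback_def by auto
  define \<Phi> where "\<Phi> q = (if q \<in> range g then \<psi> (f q) else 1\<^sub>m (fst \<Gamma> q))" for q
  have \<Phi>_g: "\<Phi> (g x) = \<psi> x" for x
    unfolding \<Phi>_def using galois_insertion_onD(5)[OF fg] by simp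
  have \<Phi>: "\<Phi> q \<in> carrier_mat (fst \<Gamma> q) (fst \<Gamma> q) \<and> invertible_mat (\<Phi> q)" for q
    by (cases "q \<in> range g") (auto simp: \<Phi>_g \<psi> \<Phi>_def invertible_mat_one galois_insertion_onD(5)[OF fg])
  show thesis
  proof
    show "is_pmod Q leQ (pmod_conj \<Phi> \<Gamma>)" "pmod_iso Q leQ \<Gamma> (pmod_conj \<Phi> \<Gamma>)"
      using is_pmod_conj[OF \<Gamma> \<Phi>] pmod_iso_conj[OF \<Gamma> \<Phi>] by blast+
    show "fst (pmod_conj \<Phi> \<Gamma>) (g x) = fst K x" for x
      unfolding pmod_conj_def using \<psi> by simp
    show "snd (pmod_conj \<Phi> \<Gamma>) (g x) (g y) = snd K x y" if "x \<le> y" for x y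
    proof -
      have "snd K x y \<in> carrier_mat (fst \<Gamma> (g y)) (fst \<Gamma> (g x))"
        using is_pmodD(2)[OF K _ _ that] \<psi> by simp
      then show ?thesis
        unfolding pmod_conj_def snd_conv \<Phi>_g comm[OF that]
        using mat_inv_cancel_right \<psi> by blast
    qed
  qed
qed

section \<open>The set of coupling costs\<close>

lemma finite_poset_reindex:
  assumes Q: "finite_poset Q leQ" and e: "inj_on e Q"
  shows "finite_poset (e ` Q) (\<lambda>u v. leQ (inv_into Q e u) (inv_into Q e v))"
  unfolding finite_poset_def
proof (intro conjI ballI impI)
  show "finite (e ` Q)" using finite_posetD(1)[OF Q] by simp
next
  fix u v w assume "u \<in> e ` Q" "v \<in> e ` Q" "w \<in> e ` Q"
    "leQ (inv_into Q e u) (inv_into Q e v) \<and> leQ (inv_into Q e v) (inv_into Q e w)"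
  then show "leQ (inv_into Q e u) (inv_into Q e w)"
    using finite_posetD(4)[OF Q] inv_into_into by metis
next
  fix u v assume uv: "u \<in> e ` Q" "v \<in> e ` Q"
    "leQ (inv_into Q e u) (inv_into Q e v) \<and> leQ (inv_into Q e v) (inv_into Q e u)"
  then have "inv_into Q e u = inv_into Q e v"
    using finite_posetD(3)[OF Q] inv_into_into by metis
  then show "u = v" using uv(1,2) by (metis f_inv_into_f)
qed (use finite_posetD(2)[OF Q] inv_into_into in metis)

lemma is_pmod_reindex:
  assumes "is_pmod Q leQ \<Gamma>"
  shows "is_pmod (e ` Q) (\<lambda>u v. leQ (inv_into Q e u) (inv_into Q e v)) (pullback (inv_into Q e) \<Gamma>)"
  using assms inv_into_into[of _ e Q] unfolding is_pmod_def pullback_def by (simp only: fst_conv snd_conv) blast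

lemma galois_insertion_on_reindex:
  assumes fg: "galois_insertion_on Q leQ f g" and e: "inj_on e Q"
  shows "galois_insertion_on (e ` Q) (\<lambda>u v. leQ (inv_into Q e u) (inv_into Q e v))
    (f \<circ> inv_into Q e) (e \<circ> g)"
  unfolding galois_insertion_on_def
proof (intro conjI ballI allI impI)
  fix u v assume "u \<in> e ` Q" "v \<in> e ` Q" "leQ (inv_into Q e u) (inv_into Q e v)"
  then show "(f \<circ> inv_into Q e) u \<le> (f \<circ> inv_into Q e) v"
    using galois_insertion_onD(3)[OF fg] inv_into_into by (metis comp_apply)
next
  fix u x assume "u \<in> e ` Q"
  then have "inv_into Q e u \<in> Q" by (rule inv_into_into)
  then show "(f \<circ> inv_into Q e) u \<le> x \<longleftrightarrow> leQ (inv_into Q e u) (inv_into Q e ((e \<circ> g) x))"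
    using galois_insertion_onD(1,4)[OF fg] e by (simp add: inv_into_f_f)
qed (use galois_insertion_onD(1,2,5)[OF fg] e in \<open>simp_all add: inv_into_f_f\<close>)

lemma galois_coupling_on_reindex:
  fixes Q :: "'q set" and e :: "'q \<Rightarrow> 'r"
  assumes c: "galois_coupling_on M N Q leQ f g h i \<Gamma>" and e: "inj_on e Q"
  defines "e' \<equiv> inv_into Q e"
  shows "galois_coupling_on M N (e ` Q) (\<lambda>u v. leQ (e' u) (e' v))
    (f \<circ> e') (e \<circ> g) (h \<circ> e') (e \<circ> i) (pullback e' \<Gamma>)"
proof -
  have Q: "finite_poset Q leQ" and fg: "galois_insertion_on Q leQ f g"
    and hi: "galois_insertion_on Q leQ h i" and \<Gamma>: "is_pmod Q leQ \<Gamma>"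
    and M: "pmod_iso UNIV (\<le>) (pullback g \<Gamma>) M" and N: "pmod_iso UNIV (\<le>) (pullback i \<Gamma>) N"
    using c unfolding galois_coupling_on_def by simp_all
  have pb: "pullback (e \<circ> b) (pullback e' \<Gamma>) = pullback b \<Gamma>" if "\<And>x. b x \<in> Q" for b
    using that e unfolding pullback_comp e'_def by (simp add: pullback_def inv_into_f_f)
  show ?thesis
    unfolding galois_coupling_on_def pb[OF galois_insertion_onD(1)[OF fg]]
      pb[OF galois_insertion_onD(1)[OF hi]]
    using finite_poset_reindex[OF Q e] galois_insertion_on_reindex[OF fg e]
      galois_insertion_on_reindex[OF hi e] is_pmod_reindex[OF \<Gamma>] M N
    unfolding e'_def by blast
qed

definition coupling_costs ::
  "('p::{finite,order} \<Rightarrow> 'p \<Rightarrow> real) \<Rightarrow> ('p, 'k::field) pmod \<Rightarrow> ('p, 'k) pmod \<Rightarrow> ereal set" where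
  "coupling_costs d M N =
     {c. \<exists>Q leQ f g h i \<Gamma>. galois_coupling M N Q leQ f g h i \<Gamma> \<and> c = coupling_cost d Q f h}"

lemma coupling_costsI:
  "galois_coupling M N Q leQ f g h i \<Gamma> \<Longrightarrow> coupling_cost d Q f h \<in> coupling_costs d M N"
  unfolding coupling_costs_def by blast

lemma d_GT_eq_Inf: "d_GT d M N = Inf (coupling_costs d M N)"
  unfolding d_GT_def coupling_costs_def ..

lemma coupling_cost_reindex:
  assumes "inj_on e Q"
  shows "coupling_cost d (e ` Q) (f \<circ> inv_into Q e) (h \<circ> inv_into Q e) =
    (SUP q\<in>Q. ereal (d (f q) (h q)))"
  unfolding coupling_cost_def image_image
  by (rule SUP_cong) (simp_all add: inv_into_f_f[OF assms])

lemma d_GT_le_coupling_on: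
  fixes d :: "'p::{finite,order} \<Rightarrow> 'p \<Rightarrow> real" and M N :: "('p, 'k::field) pmod"
    and Q :: "'q set"
  assumes c: "galois_coupling_on M N Q leQ f g h i \<Gamma>"
  shows "d_GT d M N \<le> (SUP q\<in>Q. ereal (d (f q) (h q)))"
proof -
  have "finite_poset Q leQ"
    using c unfolding galois_coupling_on_def by simp
  then obtain e :: "'q \<Rightarrow> nat" where e: "inj_on e Q"
    using finite_imp_inj_to_nat_seg[OF finite_posetD(1)] by blast
  let ?e' = "inv_into Q e"
  have gc: "galois_coupling M N (e ` Q) (\<lambda>u v. leQ (?e' u) (?e' v))
      (f \<circ> ?e') (e \<circ> g) (h \<circ> ?e') (e \<circ> i) (pullback ?e' \<Gamma>)"
    unfolding galois_coupling_eq_on by (rule galois_coupling_on_reindex[OF c e])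
  have "d_GT d M N \<le> coupling_cost d (e ` Q) (f \<circ> ?e') (h \<circ> ?e')"
    unfolding d_GT_eq_Inf using coupling_costsI[OF gc] by (rule Inf_lower)
  then show ?thesis
    unfolding coupling_cost_reindex[OF e] .
qed

lemma coupling_cost_attained:
  assumes "galois_coupling M N Q leQ f g h i \<Gamma>"
  obtains q where "q \<in> Q" and "coupling_cost d Q f h = ereal (d (f q) (h q))"
proof -
  have "finite_poset Q leQ" and "galois_insertion_on Q leQ f g"
    using assms unfolding galois_coupling_eq_on galois_coupling_on_def by simp_all
  then have "finite Q" and "Q \<noteq> {}"
    using finite_posetD(1) galois_insertion_onD(1) by blast+
  then have C: "finite ((\<lambda>q. ereal (d (f q) (h q))) ` Q)" "(\<lambda>q. ereal (d (f q) (h q))) ` Q \<noteq> {}"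
    by simp_all
  have "coupling_cost d Q f h \<in> (\<lambda>q. ereal (d (f q) (h q))) ` Q"
    unfolding coupling_cost_def cSup_eq_Max[OF C] using C by (rule Max_in)
  then show thesis using that by blast
qed

lemma d_GT_no_coupling: "coupling_costs d M N = {} \<Longrightarrow> d_GT d M N = \<infinity>"
  unfolding d_GT_eq_Inf by (simp add: top_ereal_def)

lemma finite_coupling_costs: "finite (coupling_costs d M N)"
proof (rule finite_subset)
  show "coupling_costs d M N \<subseteq> (\<lambda>(x, y). ereal (d x y)) ` UNIV"
  proof
    fix c assume "c \<in> coupling_costs d M N"
    then obtain Q leQ f g h i \<Gamma> where "galois_coupling M N Q leQ f g h i \<Gamma>"
      and "c = coupling_cost d Q f h"
      unfolding coupling_costs_def by blast
    then obtain q where "c = ereal (d (f q) (h q))"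
      using coupling_cost_attained by blast
    then show "c \<in> (\<lambda>(x, y). ereal (d x y)) ` UNIV"
      by (auto intro: image_eqI[of _ _ "(f q, h q)"])
  qed
qed simp

lemma d_GT_attained: "coupling_costs d M N \<noteq> {} \<Longrightarrow> d_GT d M N \<in> coupling_costs d M N"
  unfolding d_GT_eq_Inf cInf_eq_Min[OF finite_coupling_costs] by (rule Min_in[OF finite_coupling_costs])

lemma d_GT_nonneg:
  assumes "is_metric d"
  shows "0 \<le> d_GT d M N"
  unfolding d_GT_eq_Inf
proof (rule Inf_greatest)
  fix c assume "c \<in> coupling_costs d M N"
  then obtain Q leQ f g h i \<Gamma> where "galois_coupling M N Q leQ f g h i \<Gamma>"
    and "c = coupling_cost d Q f h"
    unfolding coupling_costs_def by blast
  then obtain q where "c = ereal (d (f q) (h q))"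
    using coupling_cost_attained by blast
  then show "0 \<le> c" using assms unfolding is_metric_def by simp
qed

lemma pmod_iso_of_diagonal_coupling:
  assumes M: "is_pmod UNIV (\<le>) M" and N: "is_pmod UNIV (\<le>) N"
    and c: "galois_coupling_on M N Q leQ f g h i \<Gamma>" and fh: "\<And>q. q \<in> Q \<Longrightarrow> f q = h q"
  shows "pmod_iso UNIV (\<le>) M N"
proof -
  have Q: "finite_poset Q leQ" and fg: "galois_insertion_on Q leQ f g"
    and hi: "galois_insertion_on Q leQ h i" and \<Gamma>: "is_pmod Q leQ \<Gamma>"
    and gM: "pmod_iso UNIV (\<le>) (pullback g \<Gamma>) M" and iN: "pmod_iso UNIV (\<le>) (pullback i \<Gamma>) N"
    using c unfolding galois_coupling_on_def by simp_all
  have "g = i" by (rule galois_insertion_right_unique[OF Q fg hi fh])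
  then have gN: "pmod_iso UNIV (\<le>) (pullback g \<Gamma>) N" using iN by simp
  have g\<Gamma>: "is_pmod UNIV (\<le>) (pullback g \<Gamma>)" by (rule is_pmod_pullback[OF fg \<Gamma>])
  show ?thesis
    using pmod_iso_trans[OF M g\<Gamma> N pmod_iso_sym[OF g\<Gamma> M gM] gN] .
qed

lemma pmod_iso_of_d_GT_zero:
  assumes d: "is_metric d" and M: "is_pmod UNIV (\<le>) M" and N: "is_pmod UNIV (\<le>) N"
    and zero: "d_GT d M N = 0"
  shows "pmod_iso UNIV (\<le>) M N"
proof -
  have "coupling_costs d M N \<noteq> {}"
    using d_GT_no_coupling[of d M N] zero by auto
  then have "d_GT d M N \<in> coupling_costs d M N"
    by (rule d_GT_attained)
  then obtain Q leQ f g h i \<Gamma> where c: "galois_coupling M N Q leQ f g h i \<Gamma>"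
    and cost: "0 = coupling_cost d Q f h"
    unfolding coupling_costs_def zero by blast
  have "f q = h q" if "q \<in> Q" for q
  proof -
    have "d (f q) (h q) \<le> 0"
      using SUP_upper[OF that, of "\<lambda>q. ereal (d (f q) (h q))"] cost[symmetric]
      unfolding coupling_cost_def by simp
    moreover have "0 \<le> d (f q) (h q)" and "d (f q) (h q) = 0 \<Longrightarrow> f q = h q"
      using d unfolding is_metric_def by blast+
    ultimately show ?thesis by simp
  qed
  then show ?thesis
    using pmod_iso_of_diagonal_coupling[OF M N c[unfolded galois_coupling_eq_on]] by blast
qed

lemma d_GT_self:
  fixes d :: "'p::{finite,order} \<Rightarrow> 'p \<Rightarrow> real" and M :: "('p, 'k::field) pmod"
  assumes d: "is_metric d" and M: "is_pmod UNIV (\<le>) M"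
  shows "d_GT d M M = 0"
proof (rule order_antisym)
  have "finite_poset (UNIV :: 'p set) (\<le>)"
    unfolding finite_poset_def by auto
  moreover have "galois_insertion_on UNIV (\<le>) id (id :: 'p \<Rightarrow> 'p)"
    unfolding galois_insertion_on_def by simp
  moreover have "pullback id M = M"
    by (simp add: pullback_def)
  ultimately have "galois_coupling_on M M UNIV (\<le>) id id id id M"
    unfolding galois_coupling_on_def using M pmod_iso_refl[OF M] by simp
  then have "d_GT d M M \<le> (SUP x\<in>UNIV. ereal (d (id x) (id x)))"
    by (rule d_GT_le_coupling_on)
  also have "\<dots> = 0"
  proof -
    have "d x x = 0" for x
      using d unfolding is_metric_def by blast
    then show ?thesis by simp
  qed
  finally show "d_GT d M M \<le> 0" .
  show "0 \<le> d_GT d M M" by (rule d_GT_nonneg[OF d])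
qed

lemma coupling_costs_swap:
  assumes "is_metric d"
  shows "coupling_costs d M N \<subseteq> coupling_costs d N M"
proof
  fix c assume "c \<in> coupling_costs d M N"
  then obtain Q leQ f g h i \<Gamma> where c: "galois_coupling M N Q leQ f g h i \<Gamma>"
    and cost: "c = coupling_cost d Q f h"
    unfolding coupling_costs_def by blast
  have "galois_coupling N M Q leQ h i f g \<Gamma>"
    using c unfolding galois_coupling_def by simp
  moreover have "d x y = d y x" for x y
    using assms unfolding is_metric_def by blast
  then have "coupling_cost d Q f h = coupling_cost d Q h f"
    unfolding coupling_cost_def by (metis (no_types))
  ultimately show "c \<in> coupling_costs d N M"
    using cost coupling_costsI[of N M Q leQ h i f g \<Gamma> d] by simp
qed

lemma d_GT_commute:
  assumes "is_metric d"
  shows "d_GT d M N = d_GT d N M"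
  unfolding d_GT_eq_Inf
  using coupling_costs_swap[OF assms, of M N] coupling_costs_swap[OF assms, of N M]
  by (metis subset_antisym)

lemma coupling_costs_pmod_iso:
  assumes M: "is_pmod UNIV (\<le>) M" and M': "is_pmod UNIV (\<le>) M'"
    and N: "is_pmod UNIV (\<le>) N" and N': "is_pmod UNIV (\<le>) N'"
    and MM': "pmod_iso UNIV (\<le>) M M'" and NN': "pmod_iso UNIV (\<le>) N N'"
  shows "coupling_costs d M N \<subseteq> coupling_costs d M' N'"
proof
  fix c assume "c \<in> coupling_costs d M N"
  then obtain Q leQ f g h i \<Gamma> where c: "galois_coupling M N Q leQ f g h i \<Gamma>"
    and cost: "c = coupling_cost d Q f h"
    unfolding coupling_costs_def by blast
  have Q: "finite_poset Q leQ" and fg: "galois_insertion_on Q leQ f g"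
    and hi: "galois_insertion_on Q leQ h i" and \<Gamma>: "is_pmod Q leQ \<Gamma>"
    and gM: "pmod_iso UNIV (\<le>) (pullback g \<Gamma>) M" and iN: "pmod_iso UNIV (\<le>) (pullback i \<Gamma>) N"
    using c unfolding galois_coupling_eq_on galois_coupling_on_def by simp_all
  have "pmod_iso UNIV (\<le>) (pullback g \<Gamma>) M'"
    using pmod_iso_trans[OF is_pmod_pullback[OF fg \<Gamma>] M M' gM MM'] .
  moreover have "pmod_iso UNIV (\<le>) (pullback i \<Gamma>) N'"
    using pmod_iso_trans[OF is_pmod_pullback[OF hi \<Gamma>] N N' iN NN'] .
  ultimately have "galois_coupling M' N' Q leQ f g h i \<Gamma>"
    unfolding galois_coupling_eq_on galois_coupling_on_def using Q fg hi \<Gamma> by simp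
  then show "c \<in> coupling_costs d M' N'"
    using cost coupling_costsI[of M' N' Q leQ f g h i \<Gamma> d] by simp
qed

lemma d_GT_pmod_iso_cong:
  assumes M: "is_pmod UNIV (\<le>) M" and M': "is_pmod UNIV (\<le>) M'"
    and N: "is_pmod UNIV (\<le>) N" and N': "is_pmod UNIV (\<le>) N'"
    and MM': "pmod_iso UNIV (\<le>) M M'" and NN': "pmod_iso UNIV (\<le>) N N'"
  shows "d_GT d M N = d_GT d M' N'"
  unfolding d_GT_eq_Inf
  using coupling_costs_pmod_iso[OF assms, of d]
    coupling_costs_pmod_iso[OF M' M N' N pmod_iso_sym[OF M M' MM'] pmod_iso_sym[OF N N' NN'], of d]
  by (metis subset_antisym)

section \<open>Gluing two couplings\<close>

locale coupling_gluing =
  fixes Q1 :: "'a set" and le1 :: "'a \<Rightarrow> 'a \<Rightarrow> bool"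
    and f1 :: "'a \<Rightarrow> 'p::order" and g1 :: "'p \<Rightarrow> 'a" and h1 :: "'a \<Rightarrow> 'p" and i1 :: "'p \<Rightarrow> 'a"
    and \<Gamma>1 :: "('a, 'k::field) pmod"
    and Q2 :: "'b set" and le2 :: "'b \<Rightarrow> 'b \<Rightarrow> bool"
    and f2 :: "'b \<Rightarrow> 'p" and g2 :: "'p \<Rightarrow> 'b" and h2 :: "'b \<Rightarrow> 'p" and i2 :: "'p \<Rightarrow> 'b"
    and \<Gamma>2 :: "('b, 'k) pmod"
  assumes poset1: "finite_poset Q1 le1" and fg1: "galois_insertion_on Q1 le1 f1 g1"
    and hi1: "galois_insertion_on Q1 le1 h1 i1" and mod1: "is_pmod Q1 le1 \<Gamma>1"
    and poset2: "finite_poset Q2 le2" and fg2: "galois_insertion_on Q2 le2 f2 g2"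
    and hi2: "galois_insertion_on Q2 le2 h2 i2" and mod2: "is_pmod Q2 le2 \<Gamma>2"
    and seam_dim: "\<And>y. fst \<Gamma>2 (g2 y) = fst \<Gamma>1 (i1 y)"
    and seam_map: "\<And>y y'. y \<le> y' \<Longrightarrow> snd \<Gamma>2 (g2 y) (g2 y') = snd \<Gamma>1 (i1 y) (i1 y')"
begin

lemma in_Q [simp]: "g1 x \<in> Q1" "i1 x \<in> Q1" "g2 x \<in> Q2" "i2 x \<in> Q2"
  by (simp_all add: galois_insertion_onD(1)[OF fg1] galois_insertion_onD(1)[OF hi1]
      galois_insertion_onD(1)[OF fg2] galois_insertion_onD(1)[OF hi2])

lemma retract [simp]: "f1 (g1 x) = x" "h1 (i1 x) = x" "f2 (g2 x) = x" "h2 (i2 x) = x"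
  by (simp_all add: galois_insertion_onD(5)[OF fg1] galois_insertion_onD(5)[OF hi1]
      galois_insertion_onD(5)[OF fg2] galois_insertion_onD(5)[OF hi2])

lemma right_adjoint_mono:
  "x \<le> y \<Longrightarrow> le1 (g1 x) (g1 y)" "x \<le> y \<Longrightarrow> le1 (i1 x) (i1 y)"
  "x \<le> y \<Longrightarrow> le2 (g2 x) (g2 y)" "x \<le> y \<Longrightarrow> le2 (i2 x) (i2 y)"
  by (fact galois_insertion_onD(2)[OF fg1] galois_insertion_onD(2)[OF hi1]
      galois_insertion_onD(2)[OF fg2] galois_insertion_onD(2)[OF hi2])+

lemma left_adjoint_mono:
  "a \<in> Q1 \<Longrightarrow> b \<in> Q1 \<Longrightarrow> le1 a b \<Longrightarrow> f1 a \<le> f1 b"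
  "a \<in> Q1 \<Longrightarrow> b \<in> Q1 \<Longrightarrow> le1 a b \<Longrightarrow> h1 a \<le> h1 b"
  "u \<in> Q2 \<Longrightarrow> v \<in> Q2 \<Longrightarrow> le2 u v \<Longrightarrow> f2 u \<le> f2 v"
  "u \<in> Q2 \<Longrightarrow> v \<in> Q2 \<Longrightarrow> le2 u v \<Longrightarrow> h2 u \<le> h2 v"
  by (fact galois_insertion_onD(3)[OF fg1] galois_insertion_onD(3)[OF hi1]
      galois_insertion_onD(3)[OF fg2] galois_insertion_onD(3)[OF hi2])+

lemma adjunction:
  "a \<in> Q1 \<Longrightarrow> f1 a \<le> x \<longleftrightarrow> le1 a (g1 x)" "a \<in> Q1 \<Longrightarrow> h1 a \<le> x \<longleftrightarrow> le1 a (i1 x)"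
  "b \<in> Q2 \<Longrightarrow> f2 b \<le> x \<longleftrightarrow> le2 b (g2 x)" "b \<in> Q2 \<Longrightarrow> h2 b \<le> x \<longleftrightarrow> le2 b (i2 x)"
  by (fact galois_insertion_onD(4)[OF fg1] galois_insertion_onD(4)[OF hi1]
      galois_insertion_onD(4)[OF fg2] galois_insertion_onD(4)[OF hi2])+

lemma adjunction_unit: "a \<in> Q1 \<Longrightarrow> le1 a (i1 (h1 a))" "b \<in> Q2 \<Longrightarrow> le2 b (g2 (f2 b))"
  by (fact galois_insertion_onD(6)[OF hi1] galois_insertion_onD(6)[OF fg2])+

text \<open>The glued poset is the union, inside \<open>Q1 \<times> Q2\<close>, of the graph of \<open>g2 \<circ> h1\<close> (a copy of
  \<open>Q1\<close>) and the graph of \<open>i1 \<circ> f2\<close> (a copy of \<open>Q2\<close>); the two copies meet exactly in the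
  seam \<open>y \<mapsto> (i1 y, g2 y)\<close>, a copy of \<open>P\<close> on which \<open>\<Gamma>1\<close> and \<open>\<Gamma>2\<close> agree.\<close>

definition left_point :: "'a \<Rightarrow> 'a \<times> 'b" where "left_point a = (a, g2 (h1 a))"
definition right_point :: "'b \<Rightarrow> 'a \<times> 'b" where "right_point b = (i1 (f2 b), b)"
definition seam :: "'p \<Rightarrow> 'a \<times> 'b" where "seam y = (i1 y, g2 y)"

definition glued :: "('a \<times> 'b) set" where "glued = left_point ` Q1 \<union> right_point ` Q2"

definition glued_le :: "'a \<times> 'b \<Rightarrow> 'a \<times> 'b \<Rightarrow> bool" where
  "glued_le p q \<longleftrightarrow> le1 (fst p) (fst q) \<and> le2 (snd p) (snd q)"

definition in_left :: "'a \<times> 'b \<Rightarrow> bool" where "in_left p \<longleftrightarrow> snd p = g2 (h1 (fst p))"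
definition in_right :: "'a \<times> 'b \<Rightarrow> bool" where "in_right p \<longleftrightarrow> fst p = i1 (f2 (snd p))"

definition same_side :: "'a \<times> 'b \<Rightarrow> 'a \<times> 'b \<Rightarrow> bool" where
  "same_side p q \<longleftrightarrow> in_left p \<and> in_left q \<or> in_right p \<and> in_right q"

lemma left_point [simp]: "a \<in> Q1 \<Longrightarrow> left_point a \<in> glued" "in_left (left_point a)"
    "fst (left_point a) = a" "snd (left_point a) = g2 (h1 a)"
  unfolding glued_def left_point_def in_left_def by simp_all

lemma right_point [simp]: "b \<in> Q2 \<Longrightarrow> right_point b \<in> glued" "in_right (right_point b)"
    "fst (right_point b) = i1 (f2 b)" "snd (right_point b) = b"
  unfolding glued_def right_point_def in_right_def by simp_all

lemma seam [simp]: "seam y \<in> glued" "in_left (seam y)" "in_right (seam y)"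
    "fst (seam y) = i1 y" "snd (seam y) = g2 y"
proof -
  have "seam y = left_point (i1 y)" unfolding seam_def left_point_def by simp
  then show "seam y \<in> glued" using left_point(1)[OF in_Q(2)] by simp
qed (simp_all add: seam_def in_left_def in_right_def)

lemma glued_memD:
  assumes "p \<in> glued"
  shows "fst p \<in> Q1" and "snd p \<in> Q2" and "h1 (fst p) = f2 (snd p)" and "in_left p \<or> in_right p"
  using assms unfolding glued_def by auto

lemma seam_if_both_sides:
  assumes "p \<in> glued" and "in_left p" and "in_right p"
  shows "p = seam (h1 (fst p))"
proof (rule prod_eqI)
  show "fst p = fst (seam (h1 (fst p)))"
    using assms(3) glued_memD(3)[OF assms(1)] unfolding in_right_def by simp
  show "snd p = snd (seam (h1 (fst p)))"
    using assms(2) unfolding in_left_def by simp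
qed

lemma same_side_seam [simp]: "p \<in> glued \<Longrightarrow> same_side p (seam y)" "p \<in> glued \<Longrightarrow> same_side (seam y) p"
  using glued_memD(4) unfolding same_side_def by auto

lemma finite_poset_glued: "finite_poset glued glued_le"
  unfolding finite_poset_def
proof (intro conjI ballI impI)
  show "finite glued"
    unfolding glued_def using finite_posetD(1)[OF poset1] finite_posetD(1)[OF poset2] by simp
next
  fix p assume "p \<in> glued"
  then show "glued_le p p"
    unfolding glued_le_def using glued_memD(1,2) finite_posetD(2)[OF poset1] finite_posetD(2)[OF poset2]
    by simp
next
  fix p q assume "p \<in> glued" "q \<in> glued" "glued_le p q \<and> glued_le q p"
  then show "p = q"
    unfolding glued_le_def using glued_memD(1,2) finite_posetD(3)[OF poset1] finite_posetD(3)[OF poset2]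
    by (meson prod_eqI)
next
  fix p q r assume "p \<in> glued" "q \<in> glued" "r \<in> glued" "glued_le p q \<and> glued_le q r"
  then show "glued_le p r"
    unfolding glued_le_def using glued_memD(1,2) finite_posetD(4)[OF poset1] finite_posetD(4)[OF poset2]
    by meson
qed

lemma glued_le_trans:
  "p \<in> glued \<Longrightarrow> q \<in> glued \<Longrightarrow> r \<in> glued \<Longrightarrow> glued_le p q \<Longrightarrow> glued_le q r \<Longrightarrow> glued_le p r"
  using finite_posetD(4)[OF finite_poset_glued] by blast

lemma seam_mono: "y \<le> y' \<Longrightarrow> glued_le (seam y) (seam y')"
  unfolding glued_le_def using right_adjoint_mono(2,3) by simp

lemma seam_le_seam_iff: "glued_le (seam y) (seam y') \<longleftrightarrow> y \<le> y'"
proof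
  assume "glued_le (seam y) (seam y')"
  then have "le1 (i1 y) (i1 y')" unfolding glued_le_def by simp
  then show "y \<le> y'" using adjunction(2)[OF in_Q(2)] by simp
qed (rule seam_mono)

lemma le_seam_above:
  assumes "p \<in> glued"
  shows "glued_le p (seam (h1 (fst p)))"
proof -
  have "le2 (snd p) (g2 (h1 (fst p)))"
    using adjunction_unit(2)[OF glued_memD(2)[OF assms]] glued_memD(3)[OF assms] by simp
  then show ?thesis
    unfolding glued_le_def using adjunction_unit(1)[OF glued_memD(1)[OF assms]] by simp
qed

lemma seam_above_le_seam:
  assumes "p \<in> glued" and "glued_le p (seam y)"
  shows "glued_le (seam (h1 (fst p))) (seam y)"
proof -
  have "le1 (fst p) (i1 y)" using assms(2) unfolding glued_le_def by simp
  then have "h1 (fst p) \<le> y" using adjunction(2)[OF glued_memD(1)[OF assms(1)]] by simp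
  then show ?thesis by (rule seam_mono)
qed

lemma seam_above_le_across:
  assumes p: "p \<in> glued" and r: "r \<in> glued" and pr: "glued_le p r" and across: "\<not> same_side p r"
  shows "glued_le (seam (h1 (fst p))) r"
proof -
  have hh: "h1 (fst p) \<le> h1 (fst r)"
    using left_adjoint_mono(2)[OF glued_memD(1)[OF p] glued_memD(1)[OF r]] pr
    unfolding glued_le_def by simp
  consider "in_left p" "in_right r" | "in_right p" "in_left r"
    using across glued_memD(4)[OF p] glued_memD(4)[OF r] unfolding same_side_def by blast
  then show ?thesis
  proof cases
    case 1
    have "le1 (i1 (h1 (fst p))) (i1 (h1 (fst r)))" by (rule right_adjoint_mono(2)[OF hh])
    then have "le1 (i1 (h1 (fst p))) (fst r)"
      using 1(2) glued_memD(3)[OF r] unfolding in_right_def by simp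
    moreover have "le2 (g2 (h1 (fst p))) (snd r)"
      using pr 1(1) unfolding glued_le_def in_left_def by simp
    ultimately show ?thesis unfolding glued_le_def by simp
  next
    case 2
    have "le1 (i1 (h1 (fst p))) (fst r)"
      using pr 2(1) glued_memD(3)[OF p] unfolding glued_le_def in_right_def by simp
    moreover have "le2 (g2 (h1 (fst p))) (g2 (h1 (fst r)))" by (rule right_adjoint_mono(3)[OF hh])
    then have "le2 (g2 (h1 (fst p))) (snd r)"
      using 2(2) unfolding in_left_def by simp
    ultimately show ?thesis unfolding glued_le_def by simp
  qed
qed

definition glued_dim :: "'a \<times> 'b \<Rightarrow> nat" where
  "glued_dim p = (if in_left p then fst \<Gamma>1 (fst p) else fst \<Gamma>2 (snd p))"

definition side_map :: "'a \<times> 'b \<Rightarrow> 'a \<times> 'b \<Rightarrow> 'k mat" where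
  "side_map p q = (if in_left p \<and> in_left q then snd \<Gamma>1 (fst p) (fst q) else snd \<Gamma>2 (snd p) (snd q))"

text \<open>Between the two sides, a map factors through the least seam point above its source.\<close>

definition glued_map :: "'a \<times> 'b \<Rightarrow> 'a \<times> 'b \<Rightarrow> 'k mat" where
  "glued_map p q = (if same_side p q then side_map p q
     else side_map (seam (h1 (fst p))) q * side_map p (seam (h1 (fst p))))"

definition glued_pmod :: "('a \<times> 'b, 'k) pmod" where
  "glued_pmod = (glued_dim, glued_map)"

lemma glued_dim_right:
  assumes "p \<in> glued" and "in_right p"
  shows "glued_dim p = fst \<Gamma>2 (snd p)"
proof (cases "in_left p")
  case True
  then obtain y where "p = seam y" using seam_if_both_sides assms by blast
  then show ?thesis by (simp add: glued_dim_def seam_dim)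
qed (simp add: glued_dim_def)

lemma side_map_right:
  assumes p: "p \<in> glued" and q: "q \<in> glued" and "in_right p" and "in_right q" and pq: "glued_le p q"
  shows "side_map p q = snd \<Gamma>2 (snd p) (snd q)"
proof (cases "in_left p \<and> in_left q")
  case True
  then obtain y y' where y: "p = seam y" "q = seam y'" using seam_if_both_sides assms by metis
  then have "y \<le> y'" using pq seam_le_seam_iff by simp
  then show ?thesis using y by (simp add: side_map_def seam_map)
qed (auto simp: side_map_def)

lemma side_map_carrier:
  assumes p: "p \<in> glued" and q: "q \<in> glued" and side: "same_side p q" and pq: "glued_le p q"
  shows "side_map p q \<in> carrier_mat (glued_dim q) (glued_dim p)"
proof (cases "in_left p \<and> in_left q")
  case True
  then show ?thesis
    using is_pmodD(2)[OF mod1 glued_memD(1)[OF p] glued_memD(1)[OF q]] pq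
    by (simp add: side_map_def glued_dim_def glued_le_def)
next
  case False
  then have "in_right p" "in_right q" using side unfolding same_side_def by auto
  then show ?thesis
    using is_pmodD(2)[OF mod2 glued_memD(2)[OF p] glued_memD(2)[OF q]] pq
      side_map_right[OF p q] glued_dim_right[OF p] glued_dim_right[OF q]
    by (simp add: glued_le_def)
qed

lemma side_map_comp:
  assumes p: "p \<in> glued" and q: "q \<in> glued" and r: "r \<in> glued"
    and pq: "glued_le p q" and qr: "glued_le q r"
    and "(in_left p \<and> in_left q \<and> in_left r) \<or> (in_right p \<and> in_right q \<and> in_right r)"
  shows "side_map p r = side_map q r * side_map p q"
  using assms(6)
proof
  assume "in_left p \<and> in_left q \<and> in_left r"
  then show ?thesis
    using is_pmodD(3)[OF mod1 glued_memD(1)[OF p] glued_memD(1)[OF q] glued_memD(1)[OF r]] pq qr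
    by (simp add: side_map_def glued_le_def)
next
  assume "in_right p \<and> in_right q \<and> in_right r"
  then show ?thesis
    using is_pmodD(3)[OF mod2 glued_memD(2)[OF p] glued_memD(2)[OF q] glued_memD(2)[OF r]] pq qr
      side_map_right[OF p q] side_map_right[OF q r] side_map_right[OF p r] glued_le_trans[OF p q r]
    by (simp add: glued_le_def)
qed

lemma glued_map_across:
  assumes "p \<in> glued" and "q \<in> glued" and "\<not> same_side p q"
  shows "glued_map p q = glued_map (seam (h1 (fst p))) q * glued_map p (seam (h1 (fst p)))"
  using assms by (simp add: glued_map_def)

lemma glued_map_carrier:
  assumes p: "p \<in> glued" and q: "q \<in> glued" and pq: "glued_le p q"
  shows "glued_map p q \<in> carrier_mat (glued_dim q) (glued_dim p)"
proof (cases "same_side p q")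
  case True
  then show ?thesis using side_map_carrier[OF p q True pq] by (simp add: glued_map_def)
next
  case False
  let ?c = "seam (h1 (fst p))"
  have "side_map ?c q \<in> carrier_mat (glued_dim q) (glued_dim ?c)"
    using side_map_carrier[OF seam(1) q] seam_above_le_across[OF p q pq False] q by simp
  moreover have "side_map p ?c \<in> carrier_mat (glued_dim ?c) (glued_dim p)"
    using side_map_carrier[OF p seam(1)] le_seam_above[OF p] p by simp
  ultimately show ?thesis using False by (simp add: glued_map_def)
qed

lemma glued_map_id:
  assumes "p \<in> glued"
  shows "glued_map p p = 1\<^sub>m (glued_dim p)"
proof (cases "in_left p")
  case True
  then show ?thesis using is_pmodD(1)[OF mod1 glued_memD(1)[OF assms]]
    by (simp add: glued_map_def side_map_def same_side_def glued_dim_def)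
next
  case False
  then have "in_right p" using glued_memD(4)[OF assms] by simp
  then show ?thesis using False is_pmodD(1)[OF mod2 glued_memD(2)[OF assms]]
    by (simp add: glued_map_def side_map_def same_side_def glued_dim_def)
qed

lemma glued_map_assoc:
  assumes "p \<in> glued" "q \<in> glued" "r \<in> glued" "s \<in> glued"
    and "glued_le p q" "glued_le q r" "glued_le r s"
  shows "glued_map r s * glued_map q r * glued_map p q = glued_map r s * (glued_map q r * glued_map p q)"
  by (rule assoc_mult_mat[OF glued_map_carrier glued_map_carrier glued_map_carrier]) (use assms in simp_all)

lemma glued_map_comp_one_side:
  assumes "p \<in> glued" "q \<in> glued" "r \<in> glued" "glued_le p q" "glued_le q r"
    and side: "(in_left p \<and> in_left q \<and> in_left r) \<or> (in_right p \<and> in_right q \<and> in_right r)"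
  shows "glued_map p r = glued_map q r * glued_map p q"
proof -
  have "same_side p q" "same_side q r" "same_side p r"
    using side unfolding same_side_def by auto
  then show ?thesis using side_map_comp[OF assms] by (simp add: glued_map_def)
qed

lemma glued_map_comp_through_seam:
  assumes p: "p \<in> glued" and r: "r \<in> glued"
    and pw: "glued_le p (seam y)" and wr: "glued_le (seam y) r"
  shows "glued_map p r = glued_map (seam y) r * glued_map p (seam y)"
proof (cases "same_side p r")
  case True
  then show ?thesis
    using glued_map_comp_one_side[OF p seam(1) r pw wr] unfolding same_side_def by simp
next
  case False
  let ?c = "seam (h1 (fst p))"
  have pc: "glued_le p ?c" and cw: "glued_le ?c (seam y)"
    using le_seam_above[OF p] seam_above_le_seam[OF p pw] by simp_all
  have "glued_map p (seam y) = glued_map ?c (seam y) * glued_map p ?c"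
    using glued_map_comp_one_side[OF p seam(1) seam(1) pc cw] glued_memD(4)[OF p] by auto
  moreover have "glued_map ?c r = glued_map (seam y) r * glued_map ?c (seam y)"
    using glued_map_comp_one_side[OF seam(1) seam(1) r cw wr] glued_memD(4)[OF r] by auto
  ultimately show ?thesis
    using glued_map_across[OF p r False] glued_map_assoc[OF p seam(1) seam(1) r pc cw wr] by simp
qed

lemma glued_map_comp_from_seam:
  assumes q: "q \<in> glued" and r: "r \<in> glued"
    and wq: "glued_le (seam y) q" and qr: "glued_le q r"
  shows "glued_map (seam y) r = glued_map q r * glued_map (seam y) q"
proof (cases "same_side q r")
  case True
  then show ?thesis
    using glued_map_comp_one_side[OF seam(1) q r wq qr] unfolding same_side_def by auto
next
  case False
  let ?c = "seam (h1 (fst q))"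
  have qc: "glued_le q ?c" and cr: "glued_le ?c r"
    using le_seam_above[OF q] seam_above_le_across[OF q r qr False] by simp_all
  have wc: "glued_le (seam y) ?c" using glued_le_trans[OF seam(1) q seam(1) wq qc] .
  have "glued_map q r = glued_map ?c r * glued_map q ?c"
    by (rule glued_map_comp_through_seam[OF q r qc cr])
  moreover have "glued_map (seam y) r = glued_map ?c r * glued_map (seam y) ?c"
    by (rule glued_map_comp_through_seam[OF seam(1) r wc cr])
  moreover have "glued_map (seam y) ?c = glued_map q ?c * glued_map (seam y) q"
    using glued_map_comp_one_side[OF seam(1) q seam(1) wq qc] glued_memD(4)[OF q] by auto
  ultimately show ?thesis
    using glued_map_assoc[OF seam(1) q seam(1) r wq qc cr] by simp
qed

lemma glued_map_comp_to_seam: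
  assumes p: "p \<in> glued" and q: "q \<in> glued"
    and pq: "glued_le p q" and qw: "glued_le q (seam y)"
  shows "glued_map p (seam y) = glued_map q (seam y) * glued_map p q"
proof (cases "same_side p q")
  case True
  then show ?thesis
    using glued_map_comp_one_side[OF p q seam(1) pq qw] unfolding same_side_def by auto
next
  case False
  let ?c = "seam (h1 (fst p))"
  have pc: "glued_le p ?c" and cq: "glued_le ?c q"
    using le_seam_above[OF p] seam_above_le_across[OF p q pq False] by simp_all
  have cw: "glued_le ?c (seam y)" using glued_le_trans[OF seam(1) q seam(1) cq qw] .
  have "glued_map p (seam y) = glued_map ?c (seam y) * glued_map p ?c"
    by (rule glued_map_comp_through_seam[OF p seam(1) pc cw])
  moreover have "glued_map p q = glued_map ?c q * glued_map p ?c"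
    by (rule glued_map_comp_through_seam[OF p q pc cq])
  moreover have "glued_map ?c (seam y) = glued_map q (seam y) * glued_map ?c q"
    using glued_map_comp_one_side[OF seam(1) q seam(1) cq qw] glued_memD(4)[OF q] by auto
  ultimately show ?thesis
    using glued_map_assoc[OF p seam(1) q seam(1) pc cq qw] by simp
qed

lemma glued_map_comp:
  assumes p: "p \<in> glued" and q: "q \<in> glued" and r: "r \<in> glued"
    and pq: "glued_le p q" and qr: "glued_le q r"
  shows "glued_map p r = glued_map q r * glued_map p q"
proof -
  consider "\<not> same_side p q" | "\<not> same_side q r" | "in_left q \<and> in_right q"
    | "(in_left p \<and> in_left q \<and> in_left r) \<or> (in_right p \<and> in_right q \<and> in_right r)"
    using glued_memD(4)[OF p] glued_memD(4)[OF q] glued_memD(4)[OF r]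
    unfolding same_side_def by blast
  then show ?thesis
  proof cases
    case 1
    let ?c = "seam (h1 (fst p))"
    have pc: "glued_le p ?c" and cq: "glued_le ?c q"
      using le_seam_above[OF p] seam_above_le_across[OF p q pq 1] by simp_all
    have cr: "glued_le ?c r" using glued_le_trans[OF seam(1) q r cq qr] .
    have "glued_map p q = glued_map ?c q * glued_map p ?c"
      by (rule glued_map_comp_through_seam[OF p q pc cq])
    moreover have "glued_map p r = glued_map ?c r * glued_map p ?c"
      by (rule glued_map_comp_through_seam[OF p r pc cr])
    moreover have "glued_map ?c r = glued_map q r * glued_map ?c q"
      by (rule glued_map_comp_from_seam[OF q r cq qr])
    ultimately show ?thesis
      using glued_map_assoc[OF p seam(1) q r pc cq qr] by simp
  next
    case 2
    let ?c = "seam (h1 (fst q))"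
    have qc: "glued_le q ?c" and cr: "glued_le ?c r"
      using le_seam_above[OF q] seam_above_le_across[OF q r qr 2] by simp_all
    have pc: "glued_le p ?c" using glued_le_trans[OF p q seam(1) pq qc] .
    have "glued_map q r = glued_map ?c r * glued_map q ?c"
      by (rule glued_map_comp_through_seam[OF q r qc cr])
    moreover have "glued_map p r = glued_map ?c r * glued_map p ?c"
      by (rule glued_map_comp_through_seam[OF p r pc cr])
    moreover have "glued_map p ?c = glued_map q ?c * glued_map p q"
      by (rule glued_map_comp_to_seam[OF p q pq qc])
    ultimately show ?thesis
      using glued_map_assoc[OF p q seam(1) r pq qc cr] by simp
  next
    case 3
    then obtain y where "q = seam y" using seam_if_both_sides q by blast
    then show ?thesis using glued_map_comp_through_seam[OF p r] pq qr by simp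
  next
    case 4
    then show ?thesis by (rule glued_map_comp_one_side[OF p q r pq qr])
  qed
qed

lemma is_pmod_glued: "is_pmod glued glued_le glued_pmod"
  unfolding is_pmod_def glued_pmod_def fst_conv snd_conv
  using glued_map_id glued_map_carrier glued_map_comp by blast

lemma galois_insertion_glued_left: "galois_insertion_on glued glued_le (f1 \<circ> fst) (left_point \<circ> g1)"
  unfolding galois_insertion_on_def
proof (intro conjI ballI allI impI)
  fix p q assume "p \<in> glued" "q \<in> glued" "glued_le p q"
  then show "(f1 \<circ> fst) p \<le> (f1 \<circ> fst) q"
    using left_adjoint_mono(1) glued_memD(1) unfolding glued_le_def by simp
next
  fix x y :: 'p assume "x \<le> y"
  then have "le1 (g1 x) (g1 y)" by (rule right_adjoint_mono(1))
  moreover have "le2 (g2 (h1 (g1 x))) (g2 (h1 (g1 y)))"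
    using right_adjoint_mono(3) left_adjoint_mono(2)[OF in_Q(1) in_Q(1) calculation] by simp
  ultimately show "glued_le ((left_point \<circ> g1) x) ((left_point \<circ> g1) y)"
    unfolding glued_le_def by simp
next
  fix p x assume p: "p \<in> glued"
  note P = glued_memD[OF p]
  show "(f1 \<circ> fst) p \<le> x \<longleftrightarrow> glued_le p ((left_point \<circ> g1) x)"
  proof
    assume "(f1 \<circ> fst) p \<le> x"
    then have le: "le1 (fst p) (g1 x)" using adjunction(1)[OF P(1)] by simp
    then have "f2 (snd p) \<le> h1 (g1 x)" using left_adjoint_mono(2)[OF P(1) in_Q(1)] P(3) by simp
    then have "le2 (snd p) (g2 (h1 (g1 x)))" using adjunction(3)[OF P(2)] by simp
    with le show "glued_le p ((left_point \<circ> g1) x)" unfolding glued_le_def by simp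
  next
    assume "glued_le p ((left_point \<circ> g1) x)"
    then show "(f1 \<circ> fst) p \<le> x" using adjunction(1)[OF P(1)] unfolding glued_le_def by simp
  qed
qed simp_all

lemma galois_insertion_glued_right: "galois_insertion_on glued glued_le (h2 \<circ> snd) (right_point \<circ> i2)"
  unfolding galois_insertion_on_def
proof (intro conjI ballI allI impI)
  fix p q assume "p \<in> glued" "q \<in> glued" "glued_le p q"
  then show "(h2 \<circ> snd) p \<le> (h2 \<circ> snd) q"
    using left_adjoint_mono(4) glued_memD(2) unfolding glued_le_def by simp
next
  fix x y :: 'p assume "x \<le> y"
  then have "le2 (i2 x) (i2 y)" by (rule right_adjoint_mono(4))
  moreover have "le1 (i1 (f2 (i2 x))) (i1 (f2 (i2 y)))"
    using right_adjoint_mono(2) left_adjoint_mono(3)[OF in_Q(4) in_Q(4) calculation] by simp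
  ultimately show "glued_le ((right_point \<circ> i2) x) ((right_point \<circ> i2) y)"
    unfolding glued_le_def by simp
next
  fix p x assume p: "p \<in> glued"
  note P = glued_memD[OF p]
  show "(h2 \<circ> snd) p \<le> x \<longleftrightarrow> glued_le p ((right_point \<circ> i2) x)"
  proof
    assume "(h2 \<circ> snd) p \<le> x"
    then have le: "le2 (snd p) (i2 x)" using adjunction(4)[OF P(2)] by simp
    then have "h1 (fst p) \<le> f2 (i2 x)" using left_adjoint_mono(3)[OF P(2) in_Q(4)] P(3) by simp
    then have "le1 (fst p) (i1 (f2 (i2 x)))" using adjunction(2)[OF P(1)] by simp
    with le show "glued_le p ((right_point \<circ> i2) x)" unfolding glued_le_def by simp
  next
    assume "glued_le p ((right_point \<circ> i2) x)"
    then show "(h2 \<circ> snd) p \<le> x" using adjunction(4)[OF P(2)] unfolding glued_le_def by simp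
  qed
qed simp_all

lemma pullback_glued_left: "pullback (left_point \<circ> g1) glued_pmod = pullback g1 \<Gamma>1"
  by (simp add: pullback_def glued_pmod_def glued_dim_def glued_map_def side_map_def same_side_def)

lemma pullback_glued_right:
  shows "fst (pullback (right_point \<circ> i2) glued_pmod) x = fst (pullback i2 \<Gamma>2) x"
    and "x \<le> y \<Longrightarrow> snd (pullback (right_point \<circ> i2) glued_pmod) x y = snd (pullback i2 \<Gamma>2) x y"
proof -
  show "fst (pullback (right_point \<circ> i2) glued_pmod) x = fst (pullback i2 \<Gamma>2) x"
    using glued_dim_right[OF right_point(1)[OF in_Q(4)] right_point(2)]
    by (simp add: pullback_def glued_pmod_def)
  assume "x \<le> y"
  then have "glued_le (right_point (i2 x)) (right_point (i2 y))"
    using galois_insertion_onD(2)[OF galois_insertion_glued_right] by simp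
  then show "snd (pullback (right_point \<circ> i2) glued_pmod) x y = snd (pullback i2 \<Gamma>2) x y"
    using side_map_right[OF right_point(1)[OF in_Q(4)] right_point(1)[OF in_Q(4)] right_point(2) right_point(2)]
    by (simp add: pullback_def glued_pmod_def glued_map_def same_side_def)
qed

theorem galois_coupling_on_glued:
  assumes "pmod_iso UNIV (\<le>) (pullback g1 \<Gamma>1) M" and "pmod_iso UNIV (\<le>) (pullback i2 \<Gamma>2) L"
  shows "galois_coupling_on M L glued glued_le (f1 \<circ> fst) (left_point \<circ> g1) (h2 \<circ> snd) (right_point \<circ> i2)
    glued_pmod"
  unfolding galois_coupling_on_def pullback_glued_left
  using finite_poset_glued galois_insertion_glued_left galois_insertion_glued_right is_pmod_glued
    assms(1) pmod_iso_cong[OF pullback_glued_right assms(2)] by simp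


lemma glued_cost_le:
  fixes d :: "'p \<Rightarrow> 'p \<Rightarrow> real"
  assumes "is_metric d"
  shows "(SUP p\<in>glued. ereal (d ((f1 \<circ> fst) p) ((h2 \<circ> snd) p)))
    \<le> (SUP a\<in>Q1. ereal (d (f1 a) (h1 a))) + (SUP b\<in>Q2. ereal (d (f2 b) (h2 b)))"
proof (rule SUP_least)
  fix p assume p: "p \<in> glued"
  have "d (f1 (fst p)) (h2 (snd p)) \<le> d (f1 (fst p)) (h1 (fst p)) + d (f2 (snd p)) (h2 (snd p))"
    using assms glued_memD(3)[OF p] unfolding is_metric_def by metis
  then have "ereal (d ((f1 \<circ> fst) p) ((h2 \<circ> snd) p))
      \<le> ereal (d (f1 (fst p)) (h1 (fst p))) + ereal (d (f2 (snd p)) (h2 (snd p)))"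
    by simp
  also have "\<dots> \<le> (SUP a\<in>Q1. ereal (d (f1 a) (h1 a))) + (SUP b\<in>Q2. ereal (d (f2 b) (h2 b)))"
    using glued_memD(1,2)[OF p] by (intro add_mono SUP_upper)
  finally show "ereal (d ((f1 \<circ> fst) p) ((h2 \<circ> snd) p))
      \<le> (SUP a\<in>Q1. ereal (d (f1 a) (h1 a))) + (SUP b\<in>Q2. ereal (d (f2 b) (h2 b)))" .
qed
end

section \<open>The triangle inequality\<close>

lemma coupling_gluing_of_couplings:
  fixes M N L :: "('p::order, 'k::field) pmod"
  assumes N: "is_pmod UNIV (\<le>) N" and L: "is_pmod UNIV (\<le>) L"
    and c1: "galois_coupling_on M N Q1 le1 f1 g1 h1 i1 \<Gamma>1"
    and c2: "galois_coupling_on N L Q2 le2 f2 g2 h2 i2 \<Gamma>2"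
  obtains \<Gamma>2' where "coupling_gluing Q1 le1 f1 g1 h1 i1 \<Gamma>1 Q2 le2 f2 g2 h2 i2 \<Gamma>2'"
    and "pmod_iso UNIV (\<le>) (pullback i2 \<Gamma>2') L"
proof -
  have poset1: "finite_poset Q1 le1" and fg1: "galois_insertion_on Q1 le1 f1 g1"
    and hi1: "galois_insertion_on Q1 le1 h1 i1" and mod1: "is_pmod Q1 le1 \<Gamma>1"
    and N1: "pmod_iso UNIV (\<le>) (pullback i1 \<Gamma>1) N"
    using c1 unfolding galois_coupling_on_def by simp_all
  have poset2: "finite_poset Q2 le2" and fg2: "galois_insertion_on Q2 le2 f2 g2"
    and hi2: "galois_insertion_on Q2 le2 h2 i2" and mod2: "is_pmod Q2 le2 \<Gamma>2"
    and N2: "pmod_iso UNIV (\<le>) (pullback g2 \<Gamma>2) N" and L2: "pmod_iso UNIV (\<le>) (pullback i2 \<Gamma>2) L"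
    using c2 unfolding galois_coupling_on_def by simp_all
  have i1\<Gamma>1: "is_pmod UNIV (\<le>) (pullback i1 \<Gamma>1)" by (rule is_pmod_pullback[OF hi1 mod1])
  have g2\<Gamma>2: "is_pmod UNIV (\<le>) (pullback g2 \<Gamma>2)" by (rule is_pmod_pullback[OF fg2 mod2])
  have "pmod_iso UNIV (\<le>) (pullback g2 \<Gamma>2) (pullback i1 \<Gamma>1)"
    using pmod_iso_trans[OF g2\<Gamma>2 N i1\<Gamma>1 N2 pmod_iso_sym[OF i1\<Gamma>1 N N1]] .
  then obtain \<Gamma>2' where mod2': "is_pmod Q2 le2 \<Gamma>2'" and iso2: "pmod_iso Q2 le2 \<Gamma>2 \<Gamma>2'"
    and dim: "\<And>y. fst \<Gamma>2' (g2 y) = fst (pullback i1 \<Gamma>1) y"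
    and map: "\<And>y y'. y \<le> y' \<Longrightarrow> snd \<Gamma>2' (g2 y) (g2 y') = snd (pullback i1 \<Gamma>1) y y'"
    using pullback_iso_lifts[OF fg2 mod2 i1\<Gamma>1] by blast
  have i2\<Gamma>2: "is_pmod UNIV (\<le>) (pullback i2 \<Gamma>2)" by (rule is_pmod_pullback[OF hi2 mod2])
  have i2\<Gamma>2': "is_pmod UNIV (\<le>) (pullback i2 \<Gamma>2')" by (rule is_pmod_pullback[OF hi2 mod2'])
  show thesis
  proof
    show "coupling_gluing Q1 le1 f1 g1 h1 i1 \<Gamma>1 Q2 le2 f2 g2 h2 i2 \<Gamma>2'"
      by unfold_locales
        (simp_all add: poset1 fg1 hi1 mod1 poset2 fg2 hi2 mod2' dim map pullback_def)
    show "pmod_iso UNIV (\<le>) (pullback i2 \<Gamma>2') L"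
      using pmod_iso_trans[OF i2\<Gamma>2' i2\<Gamma>2 L
          pmod_iso_sym[OF i2\<Gamma>2 i2\<Gamma>2' pmod_iso_pullback[OF hi2 iso2]] L2] .
  qed
qed

lemma d_GT_le_glued_cost:
  fixes d :: "'p::{finite,order} \<Rightarrow> 'p \<Rightarrow> real" and M N L :: "('p, 'k::field) pmod"
  assumes d: "is_metric d" and N: "is_pmod UNIV (\<le>) N" and L: "is_pmod UNIV (\<le>) L"
    and c1: "galois_coupling M N Q1 le1 f1 g1 h1 i1 \<Gamma>1"
    and c2: "galois_coupling N L Q2 le2 f2 g2 h2 i2 \<Gamma>2"
  shows "d_GT d M L \<le> coupling_cost d Q1 f1 h1 + coupling_cost d Q2 f2 h2"
proof -
  note c1 = c1[unfolded galois_coupling_eq_on] and c2 = c2[unfolded galois_coupling_eq_on]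
  obtain \<Gamma>2' where glue: "coupling_gluing Q1 le1 f1 g1 h1 i1 \<Gamma>1 Q2 le2 f2 g2 h2 i2 \<Gamma>2'"
    and L2': "pmod_iso UNIV (\<le>) (pullback i2 \<Gamma>2') L"
    by (rule coupling_gluing_of_couplings[OF N L c1 c2])
  interpret coupling_gluing Q1 le1 f1 g1 h1 i1 \<Gamma>1 Q2 le2 f2 g2 h2 i2 \<Gamma>2' by (fact glue)
  have M1: "pmod_iso UNIV (\<le>) (pullback g1 \<Gamma>1) M"
    using c1 unfolding galois_coupling_on_def by simp
  have "d_GT d M L \<le> (SUP p\<in>glued. ereal (d ((f1 \<circ> fst) p) ((h2 \<circ> snd) p)))"
    by (rule d_GT_le_coupling_on[OF galois_coupling_on_glued[OF M1 L2']])
  also have "\<dots> \<le> (SUP a\<in>Q1. ereal (d (f1 a) (h1 a))) + (SUP b\<in>Q2. ereal (d (f2 b) (h2 b)))"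
    by (rule glued_cost_le[OF d])
  finally show ?thesis
    unfolding coupling_cost_def .
qed

lemma d_GT_triangle:
  assumes d: "is_metric d" and N: "is_pmod UNIV (\<le>) N" and L: "is_pmod UNIV (\<le>) L"
  shows "d_GT d M L \<le> d_GT d M N + d_GT d N L"
proof (cases "coupling_costs d M N = {} \<or> coupling_costs d N L = {}")
  case True
  then have "d_GT d M N = \<infinity> \<or> d_GT d N L = \<infinity>"
    using d_GT_no_coupling by blast
  then have "d_GT d M N + d_GT d N L = \<infinity>"
    using d_GT_nonneg[OF d, of M N] d_GT_nonneg[OF d, of N L] by auto
  then show ?thesis by (simp only: ereal_less_eq(1))
next
  case False
  then have "d_GT d M N \<in> coupling_costs d M N" and "d_GT d N L \<in> coupling_costs d N L"
    using d_GT_attained by blast+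
  then obtain Q1 le1 f1 g1 h1 i1 \<Gamma>1 Q2 le2 f2 g2 h2 i2 \<Gamma>2
    where "galois_coupling M N Q1 le1 f1 g1 h1 i1 \<Gamma>1" and "d_GT d M N = coupling_cost d Q1 f1 h1"
      and "galois_coupling N L Q2 le2 f2 g2 h2 i2 \<Gamma>2" and "d_GT d N L = coupling_cost d Q2 f2 h2"
    unfolding coupling_costs_def mem_Collect_eq by blast
  then show ?thesis using d_GT_le_glued_cost[OF d N L] by simp
qed

theorem corollary3p7:
  fixes d :: "'p::{finite,order} \<Rightarrow> 'p \<Rightarrow> real"
  assumes "is_metric d"
  shows "(\<forall>M N :: ('p, 'k::field) pmod. is_pmod UNIV (\<le>) M \<longrightarrow> is_pmod UNIV (\<le>) N \<longrightarrow>
            d_GT d M N = 0 \<longrightarrow> pmod_iso UNIV (\<le>) M N)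
       \<and> (\<forall>M :: ('p, 'k) pmod. is_pmod UNIV (\<le>) M \<longrightarrow> d_GT d M M = 0)
       \<and> (\<forall>M N :: ('p, 'k) pmod. is_pmod UNIV (\<le>) M \<longrightarrow> is_pmod UNIV (\<le>) N \<longrightarrow>
            d_GT d M N \<ge> 0 \<and> d_GT d M N = d_GT d N M)
       \<and> (\<forall>M N L :: ('p, 'k) pmod. is_pmod UNIV (\<le>) M \<longrightarrow> is_pmod UNIV (\<le>) N \<longrightarrow> is_pmod UNIV (\<le>) L \<longrightarrow>
            d_GT d M L \<le> d_GT d M N + d_GT d N L)
       \<and> (\<forall>M M' N N' :: ('p, 'k) pmod. is_pmod UNIV (\<le>) M \<longrightarrow> is_pmod UNIV (\<le>) M' \<longrightarrow>
            is_pmod UNIV (\<le>) N \<longrightarrow> is_pmod UNIV (\<le>) N' \<longrightarrow>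
            pmod_iso UNIV (\<le>) M M' \<longrightarrow> pmod_iso UNIV (\<le>) N N' \<longrightarrow> d_GT d M N = d_GT d M' N')"
proof (intro conjI allI impI)
  fix M N :: "('p, 'k) pmod"
  assume "is_pmod UNIV (\<le>) M" "is_pmod UNIV (\<le>) N" "d_GT d M N = 0"
  then show "pmod_iso UNIV (\<le>) M N" by (rule pmod_iso_of_d_GT_zero[OF assms])
next
  fix M :: "('p, 'k) pmod"
  assume "is_pmod UNIV (\<le>) M"
  then show "d_GT d M M = 0" by (rule d_GT_self[OF assms])
next
  fix M N :: "('p, 'k) pmod"
  show "0 \<le> d_GT d M N" by (rule d_GT_nonneg[OF assms])
  show "d_GT d M N = d_GT d N M" by (rule d_GT_commute[OF assms])
next
  fix M N L :: "('p, 'k) pmod"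
  assume "is_pmod UNIV (\<le>) N" "is_pmod UNIV (\<le>) L"
  then show "d_GT d M L \<le> d_GT d M N + d_GT d N L" by (rule d_GT_triangle[OF assms])
next
  fix M M' N N' :: "('p, 'k) pmod"
  assume "is_pmod UNIV (\<le>) M" "is_pmod UNIV (\<le>) M'" "is_pmod UNIV (\<le>) N" "is_pmod UNIV (\<le>) N'"
    "pmod_iso UNIV (\<le>) M M'" "pmod_iso UNIV (\<le>) N N'"
  then show "d_GT d M N = d_GT d M' N'" by (rule d_GT_pmod_iso_cong)
qed

end
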